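(* Let $\mathcal{M}$ be an episodic MDP with deterministic expert $\pi^{\operatorname{E}}$ and let $\mathcal{D}_1$ be a finite set of trajectories. For every $\pi\in\Pi_{\mathrm{BC}}(\mathcal{D}_1)$, every $h\in[H]$ and every $(s,a)\in\mathcal{S}\times\mathcal{A}$, $$\sum_{\operatorname{tr}_h\in\mathbf{Tr}_h^{\mathcal{D}_1}}\mathbb{P}^{\pi^{\operatorname{E}}}(\operatorname{tr}_h)\mathbb{I}\{\operatorname{tr}_h(\cdot,\cdot)=(s,a)\}=\sum_{\operatorname{tr}_h\in\mathbf{Tr}_h^{\mathcal{D}_1}}\mathbb{P}^{\pi}(\operatorname{tr}_h)\mathbb{I}\{\operatorname{tr}_h(\cdot,\cdot)=(s,a)\}.$$
   Context: Episodic MDP $(\mathcal{S},\mathcal{A},P,r,H,\rho)$, finite spaces. For a policy $\pi$ and truncated trajectory $\operatorname{tr}_h=(s_1,a_1,\dots,s_h,a_h)$, $\mathbb{P}^\pi(\operatorname{tr}_h)=\rho(s_1)\pi_1(a_1|s_1)\prod_{\ell=1}^{h-1}P_\ell(s_{\ell+1}|s_\ell,a_\ell)\pi_{\ell+1}(a_{\ell+1}|s_{\ell+1})$; $\operatorname{tr}_h(\cdot,\cdot)=(s_h,a_h)$. $\mathcal{S}_\ell(\mathcal{D}_1)$ is the set of states appearing at step $\ell$ in $\mathcal{D}_1$, $\mathbf{Tr}_h^{\mathcal{D}_1}=\{(s_1,a_1,\dots,s_h,a_h):s_\ell\in\mathcal{S}_\ell(\mathcal{D}_1)\ \forall\ell\le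 h\}$. $\Pi_{\mathrm{BC}}(\mathcal{D}_1)$ is the set of policies taking the expert action on states in $\mathcal{D}_1$, i.e. $\pi_h(\pi^{\operatorname{E}}_h(s)|s)=1$ for all $h$ and $s\in\mathcal{S}_h(\mathcal{D}_1)$. *)

theory Defs
  imports Complex_Main
begin

text \<open>Time steps are 1-based: 1, ..., H. A (truncated) trajectory
 (s_1,a_1,...,s_h,a_h) is a list of pairs of length h whose entry at list
 index l-1 is (s_l, a_l). A (Markov, possibly stochastic) policy is
 pol :: nat => 'S => 'A => real with pol h s a = pi_h(a|s).
 Transitions: P l s a s' = P_l(s'|s,a); initial distribution rho.\<close>

definition is_dist :: "('a::finite \<Rightarrow> real) \<Rightarrow> bool" where
  "is_dist p \<longleftrightarrow> (\<forall>x. p x \<ge> 0) \<and> (\<Sum>x\<in>UNIV. p x) = 1"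

definition is_policy :: "nat \<Rightarrow> (nat \<Rightarrow> 'S::finite \<Rightarrow> 'A::finite \<Rightarrow> real) \<Rightarrow> bool" where
  "is_policy H pol \<longleftrightarrow> (\<forall>h\<in>{1..H}. \<forall>s. is_dist (pol h s))"

definition det_policy :: "(nat \<Rightarrow> 'S \<Rightarrow> 'A) \<Rightarrow> nat \<Rightarrow> 'S \<Rightarrow> 'A \<Rightarrow> real" where
  "det_policy piE h s a = (if a = piE h s then 1 else 0)"

definition traj_prob ::
  "('S \<Rightarrow> real) \<Rightarrow> (nat \<Rightarrow> 'S \<Rightarrow> 'A \<Rightarrow> 'S \<Rightarrow> real) \<Rightarrow> (nat \<Rightarrow> 'S \<Rightarrow> 'A \<Rightarrow> real)
   \<Rightarrow> ('S \<times> 'A) list \<Rightarrow> real" where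
  "traj_prob rho P pol tr =
     rho (fst (tr ! 0)) * pol 1 (fst (tr ! 0)) (snd (tr ! 0)) *
     (\<Prod>l\<in>{1..<length tr}.
        P l (fst (tr ! (l - 1))) (snd (tr ! (l - 1))) (fst (tr ! l)) *
        pol (l + 1) (fst (tr ! l)) (snd (tr ! l)))"

definition states_at :: "('S \<times> 'A) list set \<Rightarrow> nat \<Rightarrow> 'S set" where
  "states_at D1 l = {fst (tr ! (l - 1)) | tr. tr \<in> D1}"

definition Tr_D :: "('S \<times> 'A) list set \<Rightarrow> nat \<Rightarrow> ('S \<times> 'A) list set" where
  "Tr_D D1 h = {tr. length tr = h \<and> (\<forall>l\<in>{1..h}. fst (tr ! (l - 1)) \<in> states_at D1 l)}"

definition Pi_BC :: "nat \<Rightarrow> (nat \<Rightarrow> 'S \<Rightarrow> 'A) \<Rightarrow> ('S \<times> 'A) list set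
    \<Rightarrow> (nat \<Rightarrow> 'S::finite \<Rightarrow> 'A::finite \<Rightarrow> real) set" where
  "Pi_BC H piE D1 = {pol. is_policy H pol \<and>
      (\<forall>h\<in>{1..H}. \<forall>s\<in>states_at D1 h. pol h s (piE h s) = 1)}"

end

theory Submission
  imports Defs
begin

text \<open>The equality holds term by term. A policy in \<open>Pi_BC\<close> puts mass 1 on the expert action
  at every state of \<open>D1\<close>, so, being a distribution, it coincides there with the deterministic
  expert policy; and \<open>traj_prob\<close> only evaluates the policy at the states of the trajectory,
  which for a trajectory in \<open>Tr_D D1 h\<close> all lie in \<open>D1\<close>.\<close>

lemma is_dist_eq_indicator_if_eq_1:
  fixes p :: "'a::finite \<Rightarrow> real"
  assumes "is_dist p" "p x = 1"
  shows "p = (\<lambda>y. if y = x then 1 else 0)"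
proof
  fix y
  have nonneg: "\<forall>z. p z \<ge> 0" and total: "(\<Sum>z\<in>UNIV. p z) = 1"
    using assms(1) by (auto simp: is_dist_def)
  have "(\<Sum>z\<in>UNIV. p z) = p x + (\<Sum>z\<in>UNIV - {x}. p z)"
    by (simp add: sum.remove)
  then have "(\<Sum>z\<in>UNIV - {x}. p z) = 0"
    using total assms(2) by simp
  then have "\<forall>z\<in>UNIV - {x}. p z = 0"
    using nonneg by (simp add: sum_nonneg_eq_0_iff)
  then show "p y = (if y = x then 1 else 0)"
    using assms(2) by auto
qed

lemma Pi_BC_eq_det_policy:
  assumes "pol \<in> Pi_BC H piE D1" "l \<in> {1..H}" "t \<in> states_at D1 l"
  shows "pol l t = det_policy piE l t"
proof -
  have "is_dist (pol l t)" and "pol l t (piE l t) = 1"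
    using assms by (auto simp: Pi_BC_def is_policy_def)
  then have "pol l t = (\<lambda>b. if b = piE l t then 1 else 0)"
    by (rule is_dist_eq_indicator_if_eq_1)
  then show ?thesis
    by (simp add: det_policy_def fun_eq_iff)
qed

lemma traj_prob_cong_policy:
  assumes "tr \<noteq> []"
    and "\<And>l. l < length tr \<Longrightarrow> pol (Suc l) (fst (tr ! l)) = pol' (Suc l) (fst (tr ! l))"
  shows "traj_prob rho P pol tr = traj_prob rho P pol' tr"
  using assms unfolding traj_prob_def by (auto intro!: prod.cong)

lemma traj_prob_Pi_BC_eq_det_policy:
  assumes "pol \<in> Pi_BC H piE D1" "h \<in> {1..H}" "tr \<in> Tr_D D1 h"
  shows "traj_prob rho P pol tr = traj_prob rho P (det_policy piE) tr"
proof (rule traj_prob_cong_policy)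
  show "tr \<noteq> []"
    using assms(2,3) by (auto simp: Tr_D_def)
next
  fix l assume "l < length tr"
  moreover have "length tr = h" and states: "\<forall>k\<in>{1..h}. fst (tr ! (k - 1)) \<in> states_at D1 k"
    using assms(3) by (auto simp: Tr_D_def)
  ultimately have "Suc l \<in> {1..H}" and "fst (tr ! l) \<in> states_at D1 (Suc l)"
    using assms(2) states[rule_format, of "Suc l"] by auto
  then show "pol (Suc l) (fst (tr ! l)) = det_policy piE (Suc l) (fst (tr ! l))"
    using Pi_BC_eq_det_policy[OF assms(1)] by blast
qed

theorem lemma6:
  fixes H :: nat
    and rho :: "'S::finite \<Rightarrow> real"
    and P :: "nat \<Rightarrow> 'S \<Rightarrow> 'A::finite \<Rightarrow> 'S \<Rightarrow> real"
    and piE :: "nat \<Rightarrow> 'S \<Rightarrow> 'A"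
    and D1 :: "('S \<times> 'A) list set"
    and pol :: "nat \<Rightarrow> 'S \<Rightarrow> 'A \<Rightarrow> real"
    and h :: nat and s :: 'S and a :: 'A
  assumes rho_dist: "is_dist rho"
    and P_dist: "\<forall>l\<in>{1..<H}. \<forall>s a. is_dist (P l s a)"
    and D1_fin: "finite D1"
    and D1_len: "\<forall>tr\<in>D1. length tr = H"
    and pi_BC: "pol \<in> Pi_BC H piE D1"
    and h: "h \<in> {1..H}"
  shows "(\<Sum>tr\<in>Tr_D D1 h. traj_prob rho P (det_policy piE) tr *
            (if tr ! (h - 1) = (s, a) then 1 else 0))
       = (\<Sum>tr\<in>Tr_D D1 h. traj_prob rho P pol tr *
            (if tr ! (h - 1) = (s, a) then 1 else 0))"
  using traj_prob_Pi_BC_eq_det_policy[OF pi_BC h] by (auto intro: sum.cong)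

end
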